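(* Assume $\mathfrak b=\aleph_1$ and fix the family $\{g_\alpha:\alpha<\omega_1\}$ as below. Let $G \leq {}^\omega 2$ be a subgroup and let $\langle \mathcal T_\alpha : \alpha<\omega_1\rangle$ satisfy properties (i), (ii), (iii) below. Then it also satisfies property (iv); hence it is a $G$-matrix.
   Context: ${}^\omega 2$ is the Cantor space with bitwise addition modulo $2$. $\mathbb S$ is the set of perfect subtrees of ${}^{<\omega}2$ ordered by inclusion; $[T]$ is the set of branches of $T$; for $x\in{}^\omega 2$, $x+T=\{\sigma+x\restriction|\sigma|:\sigma\in T\}$. A node $\sigma\in T$ is splitting if $\sigma^\frown0,\sigma^\frown1\in T$; $T$ is skew if for each $n$ there is at most one splitting node of length $n$. The splitting predecessors of $s\in T$ are the splitting nodes of $T$ properly contained in $s$; $h_T(n)=\min\{k:\text{some node of }T\text{ of length }k\text{ has }n\text{ splitting predecessors}\}$. $g\le^* f$ means $g(n)\le f(n)$ for almost all $n$. $\{g_\alpha:\alpha<\omega_1\}\subseteq{}^\omega\omega$ is fixed with $\alpha<\beta\Rightarrow g_\alpha\le^* g_\beta$ and such that for every $f\in{}^\omega\omega$ there is $\alpha$ with $g_\alpha\not\le^* f$. For $S,T\in\mathbb S$, $S$ is somewhere dense in $T$ if there is $s\in T$ with $T_s=\{t\in T:t\subseteq s\lor s\subseteq t\}\subseteq S$. A $G$-matrix is a sequence $\langle\mathcal T_\alpha:\alpha<\omega_1\rangle$ with $\mathcal T=\bigcup_\alpha\mathcal T_\alpha$ such that: (i) $\mathcal T\subseteq\mathbb S$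 consists of skew trees; (ii) $g_\alpha\le^* h_T$ for all $T\in\mathcal T_\alpha$; (iii) for all $S\neq T$ in $\mathcal T_\alpha$ and all $x\in G$, $x+S$ and $T$ are incompatible (equivalently $|(x+[S])\cap[T]|\le\aleph_0$); (iv) for every $T\in\mathbb S$ the set $\{(x,S)\in G\times\mathcal T: x+S\text{ is somewhere dense in }T\}$ is at most countable. *)

theory Defs
  imports Main "HOL-Library.Countable_Set"
begin

text \<open>Cantor space: nat \<Rightarrow> bool; finite binary sequences: bool list.
  Addition modulo 2 is exclusive or.\<close>

definition cadd :: "(nat \<Rightarrow> bool) \<Rightarrow> (nat \<Rightarrow> bool) \<Rightarrow> (nat \<Rightarrow> bool)" where
  "cadd x y = (\<lambda>n. x n \<noteq> y n)"

definition subgroup2 :: "(nat \<Rightarrow> bool) set \<Rightarrow> bool" where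
  "subgroup2 G \<longleftrightarrow> (\<lambda>_. False) \<in> G \<and> (\<forall>x\<in>G. \<forall>y\<in>G. cadd x y \<in> G)"

definition restr :: "(nat \<Rightarrow> bool) \<Rightarrow> nat \<Rightarrow> bool list" where
  "restr x n = map x [0..<n]"

definition is_prefix :: "bool list \<Rightarrow> bool list \<Rightarrow> bool" where
  "is_prefix s t \<longleftrightarrow> length s \<le> length t \<and> take (length s) t = s"

definition is_tree :: "bool list set \<Rightarrow> bool" where
  "is_tree T \<longleftrightarrow> (\<forall>t\<in>T. \<forall>s. is_prefix s t \<longrightarrow> s \<in> T)"

definition splitting :: "bool list set \<Rightarrow> bool list \<Rightarrow> bool" where
  "splitting T s \<longleftrightarrow> s \<in> T \<and> s @ [False] \<in> T \<and> s @ [True] \<in> T"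

definition perfect_tree :: "bool list set \<Rightarrow> bool" where
  "perfect_tree T \<longleftrightarrow> is_tree T \<and> T \<noteq> {} \<and>
     (\<forall>s\<in>T. \<exists>t. is_prefix s t \<and> splitting T t)"

definition branches :: "bool list set \<Rightarrow> (nat \<Rightarrow> bool) set" where
  "branches T = {x. \<forall>n. restr x n \<in> T}"

definition shift_tree :: "(nat \<Rightarrow> bool) \<Rightarrow> bool list set \<Rightarrow> bool list set" where
  "shift_tree x T = {map (\<lambda>i. (\<sigma> ! i) \<noteq> x i) [0..<length \<sigma>] | \<sigma>. \<sigma> \<in> T}"

definition skew :: "bool list set \<Rightarrow> bool" where
  "skew T \<longleftrightarrow> (\<forall>n. \<forall>s t. splitting T s \<and> splitting T t \<and> length s = n \<and> length t = n \<longrightarrow> s = t)"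

definition split_preds :: "bool list set \<Rightarrow> bool list \<Rightarrow> bool list set" where
  "split_preds T s = {t. splitting T t \<and> is_prefix t s \<and> t \<noteq> s}"

definition hT :: "bool list set \<Rightarrow> nat \<Rightarrow> nat" where
  "hT T n = (LEAST k. \<exists>s\<in>T. length s = k \<and> card (split_preds T s) = n)"

definition le_star :: "(nat \<Rightarrow> nat) \<Rightarrow> (nat \<Rightarrow> nat) \<Rightarrow> bool" where
  "le_star g f \<longleftrightarrow> (\<exists>N. \<forall>n\<ge>N. g n \<le> f n)"

definition compatible :: "bool list set \<Rightarrow> bool list set \<Rightarrow> bool" where
  "compatible S T \<longleftrightarrow> (\<exists>R. perfect_tree R \<and> R \<subseteq> S \<and> R \<subseteq> T)"

definition subtree_at :: "bool list set \<Rightarrow> bool list \<Rightarrow> bool list set" where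
  "subtree_at T s = {t\<in>T. is_prefix t s \<or> is_prefix s t}"

definition somewhere_dense :: "bool list set \<Rightarrow> bool list set \<Rightarrow> bool" where
  "somewhere_dense S T \<longleftrightarrow> (\<exists>s\<in>T. subtree_at T s \<subseteq> S)"

text \<open>The index type 'a plays the role of omega_1: an uncountable well-order all of
  whose proper initial segments are countable.\<close>
definition is_omega1 :: "'a::wellorder itself \<Rightarrow> bool" where
  "is_omega1 _ \<longleftrightarrow> uncountable (UNIV :: 'a set) \<and> (\<forall>\<alpha>::'a. countable {\<beta>. \<beta> < \<alpha>})"

definition G_matrix ::
  "('a::wellorder \<Rightarrow> nat \<Rightarrow> nat) \<Rightarrow> (nat \<Rightarrow> bool) set \<Rightarrow> ('a \<Rightarrow> bool list set set) \<Rightarrow> bool" where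
  "G_matrix g G Tm \<longleftrightarrow>
     (\<forall>\<alpha>. \<forall>T\<in>Tm \<alpha>. perfect_tree T \<and> skew T) \<and>
     (\<forall>\<alpha>. \<forall>T\<in>Tm \<alpha>. le_star (g \<alpha>) (hT T)) \<and>
     (\<forall>\<alpha>. \<forall>S\<in>Tm \<alpha>. \<forall>T\<in>Tm \<alpha>. S \<noteq> T \<longrightarrow> (\<forall>x\<in>G. \<not> compatible (shift_tree x S) T)) \<and>
     (\<forall>T. perfect_tree T \<longrightarrow>
        countable {(x, S). x \<in> G \<and> S \<in> (\<Union>\<alpha>. Tm \<alpha>) \<and> somewhere_dense (shift_tree x S) T})"

end

theory Submission
  imports Defs "HOL-Library.Sublist"
begin

text \<open>Fix a perfect tree \<open>T\<close> and a node \<open>s \<in> T\<close>. If \<open>x + S\<close> contains \<open>T\<^sub>s\<close> with \<open>S \<in> \<T>\<^sub>\<alpha>\<close>,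
  then \<open>h\<^sub>S \<le> h\<^bsub>T\<^sub>s\<^esub>\<close> pointwise, so \<open>g\<^sub>\<alpha> \<le>\<^sup>* h\<^bsub>T\<^sub>s\<^esub>\<close>; as the \<open>g\<^sub>\<alpha>\<close> are increasing and
  unbounded, only countably many \<open>\<alpha>\<close> can occur. For a fixed \<open>\<alpha>\<close> at most one pair \<open>(x, S)\<close>
  occurs: two different trees \<open>S, S'\<close> would give the common perfect subtree \<open>y + T\<^sub>s\<close> of
  \<open>(x + y) + S\<close> and \<open>S'\<close>, against (iii), and for \<open>S = S'\<close> skewness forces \<open>x = y\<close>, since
  the shifts of a long splitting node of \<open>T\<^sub>s\<close> are splitting nodes of \<open>S\<close> of equal length.
  Taking the union over the countably many nodes \<open>s\<close> gives (iv).\<close>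

subsection \<open>Shifting finite sequences\<close>

definition shift_list :: "(nat \<Rightarrow> bool) \<Rightarrow> bool list \<Rightarrow> bool list" where
  "shift_list x \<sigma> = map (\<lambda>i. (\<sigma> ! i) \<noteq> x i) [0..<length \<sigma>]"

lemma shift_tree_eq_image: "shift_tree x T = shift_list x ` T"
  unfolding shift_tree_def shift_list_def by auto

lemma length_shift_list [simp]: "length (shift_list x s) = length s"
  by (simp add: shift_list_def)

lemma nth_shift_list [simp]: "i < length s \<Longrightarrow> shift_list x s ! i = (s ! i \<noteq> x i)"
  by (simp add: shift_list_def)

lemma shift_list_shift_list [simp]: "shift_list x (shift_list x s) = s"
  by (rule nth_equalityI) auto

lemma shift_list_eq_iff [simp]: "shift_list x s = shift_list x t \<longleftrightarrow> s = t"
  by (metis shift_list_shift_list)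

lemma inj_shift_list: "inj (shift_list x)"
  by (simp add: inj_def)

lemma shift_list_cadd: "shift_list (cadd x y) s = shift_list y (shift_list x s)"
  by (rule nth_equalityI) (auto simp: cadd_def)

lemma shift_list_take: "shift_list x (take k s) = take k (shift_list x s)"
  by (rule nth_equalityI) auto

lemma shift_list_snoc: "shift_list x (s @ [b]) = shift_list x s @ [b \<noteq> x (length s)]"
  by (rule nth_equalityI) (auto simp: nth_append less_Suc_eq)

lemma mem_image_shift_list: "t \<in> shift_list x ` T \<longleftrightarrow> shift_list x t \<in> T"
  by (metis image_iff shift_list_shift_list)

lemma image_shift_list_subset_iff: "shift_list x ` A \<subseteq> B \<longleftrightarrow> A \<subseteq> shift_list x ` B"
  by (auto simp: mem_image_shift_list)

lemma is_prefix_iff_prefix: "is_prefix s t \<longleftrightarrow> prefix s t"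
  unfolding is_prefix_def prefix_def
  by (metis append_eq_conv_conj append_take_drop_id length_append le_add1)

lemma prefix_shift_list_iff: "prefix (shift_list x s) (shift_list x t) \<longleftrightarrow> prefix s t"
proof -
  have "is_prefix (shift_list x s) (shift_list x t) \<longleftrightarrow> is_prefix s t"
    unfolding is_prefix_def by (metis length_shift_list shift_list_eq_iff shift_list_take)
  thus ?thesis by (simp add: is_prefix_iff_prefix)
qed

lemma is_tree_prefix_closed: "is_tree T \<Longrightarrow> t \<in> T \<Longrightarrow> prefix s t \<Longrightarrow> s \<in> T"
  unfolding is_tree_def is_prefix_iff_prefix by blast

lemma splitting_shift_list_iff:
  "splitting (shift_list x ` T) (shift_list x s) \<longleftrightarrow> splitting T s"
proof -
  have "shift_list x s @ [False] = shift_list x (s @ [x (length s)])"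
    and "shift_list x s @ [True] = shift_list x (s @ [\<not> x (length s)])"
    by (simp_all add: shift_list_snoc)
  thus ?thesis unfolding splitting_def mem_image_shift_list shift_list_shift_list
    by (cases "x (length s)") auto
qed

lemma split_preds_shift_list:
  "split_preds (shift_list x ` T) (shift_list x s) = shift_list x ` split_preds T s"
proof -
  have "t \<in> split_preds (shift_list x ` T) (shift_list x s) \<longleftrightarrow>
        shift_list x t \<in> split_preds T s" for t
    using splitting_shift_list_iff[of x T "shift_list x t"]
      prefix_shift_list_iff[of x "shift_list x t" s]
      shift_list_eq_iff[of x t "shift_list x s"]
    unfolding split_preds_def is_prefix_iff_prefix by simp
  thus ?thesis by (simp add: set_eq_iff mem_image_shift_list)
qed

lemma hT_shift_list: "hT (shift_list x ` T) = hT T"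
proof
  fix n
  have "(\<exists>s\<in>shift_list x ` T. length s = k \<and> card (split_preds (shift_list x ` T) s) = n)
        \<longleftrightarrow> (\<exists>s\<in>T. length s = k \<and> card (split_preds T s) = n)" for k
    by (simp add: split_preds_shift_list card_image inj_on_subset[OF inj_shift_list])
  thus "hT (shift_list x ` T) n = hT T n" unfolding hT_def by simp
qed

lemma perfect_tree_shift_list:
  assumes "perfect_tree T" shows "perfect_tree (shift_list x ` T)"
proof -
  have tree: "is_tree T" and ext: "\<forall>s\<in>T. \<exists>t. is_prefix s t \<and> splitting T t"
    using assms unfolding perfect_tree_def by auto
  have "is_tree (shift_list x ` T)"
    unfolding is_tree_def is_prefix_iff_prefix
  proof (intro ballI allI impI)
    fix t s assume "t \<in> shift_list x ` T" "prefix s t"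
    hence "prefix (shift_list x s) (shift_list x t)" "shift_list x t \<in> T"
      by (auto simp: prefix_shift_list_iff mem_image_shift_list)
    thus "s \<in> shift_list x ` T"
      using is_tree_prefix_closed[OF tree] by (auto simp: mem_image_shift_list)
  qed
  moreover have "\<exists>t. is_prefix s t \<and> splitting (shift_list x ` T) t"
    if "s \<in> shift_list x ` T" for s
  proof -
    have "shift_list x s \<in> T" using that by (simp add: mem_image_shift_list)
    then obtain t where "prefix (shift_list x s) t" "splitting T t"
      using ext by (auto simp: is_prefix_iff_prefix)
    thus ?thesis unfolding is_prefix_iff_prefix
      by (metis prefix_shift_list_iff shift_list_shift_list splitting_shift_list_iff)
  qed
  ultimately show ?thesis using assms unfolding perfect_tree_def by auto
qed

lemma perfect_tree_subtree_at:
  assumes "perfect_tree T" "s \<in> T" shows "perfect_tree (subtree_at T s)"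
proof -
  have tree: "is_tree T" and ext: "\<forall>u\<in>T. \<exists>t. prefix u t \<and> splitting T t"
    using assms(1) unfolding perfect_tree_def is_prefix_iff_prefix by auto
  have "is_tree (subtree_at T s)"
    unfolding is_tree_def is_prefix_iff_prefix
  proof (intro ballI allI impI)
    fix t u assume t: "t \<in> subtree_at T s" and u: "prefix u t"
    hence "t \<in> T" "prefix t s \<or> prefix s t"
      unfolding subtree_at_def is_prefix_iff_prefix by auto
    moreover from this have "prefix u s \<or> prefix s u"
      using u prefix_same_cases prefix_order.order_trans by blast
    ultimately show "u \<in> subtree_at T s"
      using is_tree_prefix_closed[OF tree _ u] unfolding subtree_at_def is_prefix_iff_prefix
      by blast
  qed
  moreover have "\<exists>t. is_prefix u t \<and> splitting (subtree_at T s) t"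
    if u: "u \<in> subtree_at T s" for u
  proof -
    define v where "v = (if prefix s u then u else s)"
    have v: "v \<in> T" "prefix u v" "prefix s v"
      using u assms(2) unfolding v_def subtree_at_def is_prefix_iff_prefix by auto
    then obtain t where t: "prefix v t" "splitting T t" using ext by blast
    hence "prefix s t" "prefix u t" using v prefix_order.order_trans by blast+
    moreover from this(1) have "prefix s (t @ [b])" for b by (simp add: prefix_snoc)
    ultimately show ?thesis
      using t(2) unfolding splitting_def subtree_at_def is_prefix_iff_prefix by blast
  qed
  moreover have "s \<in> subtree_at T s"
    using assms(2) unfolding subtree_at_def is_prefix_iff_prefix by auto
  ultimately show ?thesis unfolding perfect_tree_def by auto
qed

lemma splitting_mono: "R \<subseteq> U \<Longrightarrow> splitting R t \<Longrightarrow> splitting U t"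
  unfolding splitting_def by auto

lemma long_splitting_node:
  assumes "perfect_tree R" shows "\<exists>t. splitting R t \<and> m \<le> length t"
proof (induction m)
  case 0 thus ?case using assms unfolding perfect_tree_def by blast
next
  case (Suc m)
  then obtain t where t: "splitting R t" "m \<le> length t" by blast
  hence "t @ [False] \<in> R" unfolding splitting_def by auto
  then obtain t' where "prefix (t @ [False]) t'" "splitting R t'"
    using assms unfolding perfect_tree_def is_prefix_iff_prefix by blast
  thus ?case using t(2) by (metis Suc_le_mono length_append_singleton order_trans prefix_length_le)
qed

lemma skew_shift_unique:
  assumes S: "skew S" and R: "perfect_tree R"
    and x: "shift_list x ` R \<subseteq> S" and y: "shift_list y ` R \<subseteq> S"
  shows "x = y"
proof
  fix m
  obtain t where t: "splitting R t" "Suc m \<le> length t" using long_splitting_node[OF R] by blast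
  have "splitting S (shift_list x t)" "splitting S (shift_list y t)"
    using splitting_mono[OF x] splitting_mono[OF y] t(1)
    by (simp_all add: splitting_shift_list_iff)
  hence "shift_list x t = shift_list y t" using S unfolding skew_def by simp
  hence "shift_list x t ! m = shift_list y t ! m" by simp
  thus "x m = y m" using t(2) by auto
qed

subsection \<open>The height function \<open>h\<^sub>T\<close>\<close>

lemma prefix_take_eq: "prefix t s \<Longrightarrow> t = take (length t) s"
  by (metis append_eq_conv_conj prefix_def)

lemma finite_split_preds: "finite (split_preds U s)"
proof -
  have "split_preds U s \<subseteq> (\<lambda>j. take j s) ` {..length s}"
    unfolding split_preds_def is_prefix_iff_prefix
    by (auto intro!: image_eqI prefix_take_eq simp: prefix_length_le)
  thus ?thesis by (rule finite_subset) simp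
qed

lemma split_preds_Nil: "split_preds U [] = {}"
  unfolding split_preds_def is_prefix_iff_prefix by auto

lemma split_preds_take_Suc:
  "split_preds U (take (Suc j) r) \<subseteq> insert (take j r) (split_preds U (take j r))"
proof
  fix t assume "t \<in> split_preds U (take (Suc j) r)"
  hence t: "prefix t (take (Suc j) r)" "t \<noteq> take (Suc j) r" "splitting U t"
    unfolding split_preds_def is_prefix_iff_prefix by auto
  show "t \<in> insert (take j r) (split_preds U (take j r))"
  proof (cases "t = take j r")
    case False
    have t_eq: "t = take (length t) (take (Suc j) r)" using prefix_take_eq[OF t(1)] .
    moreover have "length t \<noteq> length (take (Suc j) r)" using t_eq t(2) by (metis take_all order_refl)
    ultimately have "length t \<le> j"
      using prefix_length_le[OF t(1)] by (auto simp: min_def split: if_splits)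
    hence "t = take (length t) (take j r)" using t_eq by (simp add: min_def)
    hence "prefix t (take j r)" by (metis take_is_prefix)
    thus ?thesis using t False unfolding split_preds_def is_prefix_iff_prefix by auto
  qed simp
qed

lemma nat_unit_steps_hit:
  fixes p :: "nat \<Rightarrow> nat"
  assumes "p 0 = 0" and "\<And>j. p (Suc j) \<le> Suc (p j)" and "n \<le> p k"
  shows "\<exists>j\<le>k. p j = n"
  using assms(3)
proof (induction k)
  case (Suc k)
  show ?case
  proof (cases "n \<le> p k")
    case True thus ?thesis using Suc.IH le_SucI by blast
  next
    case False thus ?thesis using assms(2)[of k] Suc.prems by (intro exI[of _ "Suc k"]) simp
  qed
qed (use assms(1) in auto)

text \<open>Along a branch the number of splitting predecessors grows by at most one per level.\<close>

lemma split_preds_card_take: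
  assumes "n \<le> card (split_preds U r)"
  shows "\<exists>j\<le>length r. card (split_preds U (take j r)) = n"
proof -
  have "card (split_preds U (take (Suc j) r)) \<le> Suc (card (split_preds U (take j r)))" for j
  proof -
    have "card (split_preds U (take (Suc j) r))
          \<le> card (insert (take j r) (split_preds U (take j r)))"
      by (intro card_mono split_preds_take_Suc) (simp add: finite_split_preds)
    also have "\<dots> \<le> Suc (card (split_preds U (take j r)))"
      by (simp add: card_insert_if finite_split_preds)
    finally show ?thesis .
  qed
  moreover have "n \<le> card (split_preds U (take (length r) r))" using assms by simp
  ultimately show ?thesis
    by (intro nat_unit_steps_hit[where p = "\<lambda>j. card (split_preds U (take j r))"])
      (simp_all add: split_preds_Nil)
qed

lemma split_preds_mono: "R \<subseteq> U \<Longrightarrow> split_preds R s \<subseteq> split_preds U s"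
  unfolding split_preds_def using splitting_mono by blast

lemma perfect_tree_many_split_preds:
  assumes "perfect_tree R" shows "\<exists>r\<in>R. n \<le> card (split_preds R r)"
proof (induction n)
  case 0 thus ?case using assms unfolding perfect_tree_def by auto
next
  case (Suc n)
  then obtain s where s: "s \<in> R" "n \<le> card (split_preds R s)" by blast
  then obtain t where t: "prefix s t" "splitting R t"
    using assms unfolding perfect_tree_def is_prefix_iff_prefix by blast
  have "insert t (split_preds R s) \<subseteq> split_preds R (t @ [False])"
  proof
    fix u assume "u \<in> insert t (split_preds R s)"
    hence "splitting R u" "prefix u t"
      using t prefix_order.order_trans unfolding split_preds_def is_prefix_iff_prefix by auto
    moreover from this(2) have "u \<noteq> t @ [False]" using prefix_length_le by fastforce
    ultimately show "u \<in> split_preds R (t @ [False])"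
      unfolding split_preds_def is_prefix_iff_prefix by (simp add: prefix_snoc)
  qed
  moreover have "t \<notin> split_preds R s"
    using t unfolding split_preds_def is_prefix_iff_prefix by (auto dest: prefix_order.antisym)
  ultimately have "Suc n \<le> card (split_preds R (t @ [False]))"
    using s(2) by (metis card_insert_disjoint card_mono finite_split_preds Suc_le_mono order_trans)
  moreover have "t @ [False] \<in> R" using t unfolding splitting_def by auto
  ultimately show ?case by blast
qed

lemma perfect_tree_split_preds_exact:
  assumes "perfect_tree R" shows "\<exists>r\<in>R. card (split_preds R r) = n"
proof -
  obtain r where r: "r \<in> R" "n \<le> card (split_preds R r)"
    using perfect_tree_many_split_preds[OF assms] by blast
  then obtain j where "card (split_preds R (take j r)) = n" using split_preds_card_take by blast
  moreover have "take j r \<in> R"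
    using assms r(1) is_tree_prefix_closed take_is_prefix unfolding perfect_tree_def by blast
  ultimately show ?thesis by blast
qed

lemma hT_antimono:
  assumes U: "is_tree U" and R: "perfect_tree R" and sub: "R \<subseteq> U"
  shows "hT U n \<le> hT R n"
proof -
  have "\<exists>k. \<exists>s\<in>R. length s = k \<and> card (split_preds R s) = n"
    using perfect_tree_split_preds_exact[OF R] by blast
  from LeastI_ex[OF this] obtain r where r: "r \<in> R" "length r = hT R n"
    "card (split_preds R r) = n" unfolding hT_def by blast
  have "n \<le> card (split_preds U r)"
    using r(3) split_preds_mono[OF sub] by (metis card_mono finite_split_preds)
  then obtain j where j: "j \<le> length r" "card (split_preds U (take j r)) = n"
    using split_preds_card_take by blast
  have "take j r \<in> U" using is_tree_prefix_closed[OF U] r(1) sub take_is_prefix by blast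
  hence "hT U n \<le> length (take j r)" unfolding hT_def using j by (intro Least_le) blast
  thus ?thesis using j r by simp
qed

subsection \<open>Unbounded \<open>\<omega>\<^sub>1\<close>-scales\<close>

lemma le_star_trans:
  assumes "le_star f g" "le_star g h" shows "le_star f h"
proof -
  obtain M N where "\<forall>n\<ge>M. f n \<le> g n" "\<forall>n\<ge>N. g n \<le> h n"
    using assms unfolding le_star_def by blast
  hence "\<forall>n\<ge>max M N. f n \<le> h n" using order_trans by fastforce
  thus ?thesis unfolding le_star_def by blast
qed

lemma le_star_of_le: "(\<And>n. f n \<le> g n) \<Longrightarrow> le_star f g"
  unfolding le_star_def by blast

lemma is_omega1_uncountable_unbounded:
  assumes "is_omega1 TYPE('a::wellorder)" and "uncountable (A :: 'a set)"
  shows "\<exists>\<alpha>\<in>A. \<beta> < \<alpha>"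
proof (rule ccontr)
  assume "\<not> (\<exists>\<alpha>\<in>A. \<beta> < \<alpha>)"
  hence "A \<subseteq> insert \<beta> {\<gamma>. \<gamma> < \<beta>}" by (auto simp: not_less le_less)
  moreover have "countable {\<gamma>. \<gamma> < \<beta>}" using assms(1) unfolding is_omega1_def by blast
  ultimately have "countable A" by (simp add: countable_subset)
  thus False using assms(2) by contradiction
qed

lemma is_omega1_countable_bounded_indices:
  assumes "is_omega1 TYPE('a::wellorder)"
    and mono: "\<forall>\<alpha> \<beta>::'a. \<alpha> < \<beta> \<longrightarrow> le_star (g \<alpha>) (g \<beta>)"
    and unbounded: "\<forall>f. \<exists>\<alpha>. \<not> le_star (g \<alpha>) f"
  shows "countable {\<alpha>. le_star (g \<alpha>) f}"
proof (rule ccontr)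
  assume "uncountable {\<alpha>. le_star (g \<alpha>) f}"
  have "le_star (g \<beta>) f" for \<beta>
  proof -
    obtain \<alpha> where "le_star (g \<alpha>) f" "\<beta> < \<alpha>"
      using is_omega1_uncountable_unbounded[OF assms(1) \<open>uncountable _\<close>] by blast
    thus ?thesis using mono le_star_trans by blast
  qed
  thus False using unbounded by blast
qed

lemma countable_if_subsingleton:
  assumes "\<And>p q. p \<in> A \<Longrightarrow> q \<in> A \<Longrightarrow> p = q" shows "countable A"
proof (cases "A = {}")
  case False
  then obtain p where "p \<in> A" by blast
  hence "A \<subseteq> {p}" using assms by blast
  thus ?thesis by (rule countable_subset) simp
qed simp

lemma countable_shifts_containing:
  fixes g :: "'a::wellorder \<Rightarrow> nat \<Rightarrow> nat"
  assumes omega1: "is_omega1 TYPE('a)"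
    and g_mono: "\<forall>\<alpha> \<beta>. \<alpha> < \<beta> \<longrightarrow> le_star (g \<alpha>) (g \<beta>)"
    and g_unbounded: "\<forall>f. \<exists>\<alpha>. \<not> le_star (g \<alpha>) f"
    and G_sub: "subgroup2 G"
    and prop_i: "\<forall>\<alpha>. \<forall>T\<in>Tm \<alpha>. perfect_tree T \<and> skew T"
    and prop_ii: "\<forall>\<alpha>. \<forall>T\<in>Tm \<alpha>. le_star (g \<alpha>) (hT T)"
    and prop_iii: "\<forall>\<alpha>. \<forall>S\<in>Tm \<alpha>. \<forall>T\<in>Tm \<alpha>. S \<noteq> T \<longrightarrow>
                     (\<forall>x\<in>G. \<not> compatible (shift_tree x S) T)"
    and R: "perfect_tree R"
  shows "countable {(x, S). x \<in> G \<and> S \<in> (\<Union>\<alpha>. Tm \<alpha>) \<and> shift_list x ` R \<subseteq> S}"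
proof -
  define Q where "Q \<alpha> = {(x, S). x \<in> G \<and> S \<in> Tm \<alpha> \<and> shift_list x ` R \<subseteq> S}" for \<alpha>
  have "le_star (g \<alpha>) (hT R)" if nonempty: "Q \<alpha> \<noteq> {}" for \<alpha>
  proof -
    obtain x S where xS: "S \<in> Tm \<alpha>" "shift_list x ` R \<subseteq> S"
      using nonempty unfolding Q_def by blast
    have "is_tree S" using prop_i xS(1) unfolding perfect_tree_def by blast
    hence "hT S n \<le> hT R n" for n
      using hT_antimono[OF _ perfect_tree_shift_list[OF R] xS(2)] by (simp add: hT_shift_list)
    thus ?thesis using prop_ii xS(1) le_star_trans le_star_of_le by blast
  qed
  hence "{\<alpha>. Q \<alpha> \<noteq> {}} \<subseteq> {\<alpha>. le_star (g \<alpha>) (hT R)}" by blast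
  hence countable_indices: "countable {\<alpha>. Q \<alpha> \<noteq> {}}"
    using is_omega1_countable_bounded_indices[OF omega1 g_mono g_unbounded] countable_subset
    by blast
  have "p = q" if pq: "p \<in> Q \<alpha>" "q \<in> Q \<alpha>" for p q \<alpha>
  proof -
    obtain x S y S' where p: "p = (x, S)" "x \<in> G" "S \<in> Tm \<alpha>" "shift_list x ` R \<subseteq> S"
      and q: "q = (y, S')" "y \<in> G" "S' \<in> Tm \<alpha>" "shift_list y ` R \<subseteq> S'"
      using pq unfolding Q_def by blast
    have "shift_list y ` R = shift_list (cadd x y) ` shift_list x ` R"
      by (simp add: image_comp comp_def shift_list_cadd)
    hence "shift_list y ` R \<subseteq> shift_tree (cadd x y) S"
      using image_mono[OF p(4), of "shift_list (cadd x y)"] by (simp add: shift_tree_eq_image)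
    hence "compatible (shift_tree (cadd x y) S) S'"
      unfolding compatible_def using q(4) perfect_tree_shift_list[OF R] by blast
    moreover have "cadd x y \<in> G" using G_sub p(2) q(2) unfolding subgroup2_def by blast
    ultimately have "S = S'" using prop_iii p(3) q(3) by blast
    moreover have "skew S" using prop_i p(3) by blast
    ultimately have "x = y" using skew_shift_unique[OF _ R p(4)] q(4) by simp
    thus ?thesis using p q \<open>S = S'\<close> by simp
  qed
  hence "countable (Q \<alpha>)" for \<alpha>
    by (rule countable_if_subsingleton) blast
  moreover have "{(x, S). x \<in> G \<and> S \<in> (\<Union>\<alpha>. Tm \<alpha>) \<and> shift_list x ` R \<subseteq> S}
                 = (\<Union>\<alpha>\<in>{\<alpha>. Q \<alpha> \<noteq> {}}. Q \<alpha>)"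
    unfolding Q_def by blast
  ultimately show ?thesis using countable_indices by auto
qed

theorem mainTheorem16:
  fixes g :: "'a::wellorder \<Rightarrow> nat \<Rightarrow> nat"
    and G :: "(nat \<Rightarrow> bool) set"
    and Tm :: "'a \<Rightarrow> bool list set set"
  assumes omega1: "is_omega1 TYPE('a)"
    and g_mono: "\<forall>\<alpha> \<beta>. \<alpha> < \<beta> \<longrightarrow> le_star (g \<alpha>) (g \<beta>)"
    and g_unbounded: "\<forall>f. \<exists>\<alpha>. \<not> le_star (g \<alpha>) f"
    and G_sub: "subgroup2 G"
    and prop_i: "\<forall>\<alpha>. \<forall>T\<in>Tm \<alpha>. perfect_tree T \<and> skew T"
    and prop_ii: "\<forall>\<alpha>. \<forall>T\<in>Tm \<alpha>. le_star (g \<alpha>) (hT T)"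
    and prop_iii: "\<forall>\<alpha>. \<forall>S\<in>Tm \<alpha>. \<forall>T\<in>Tm \<alpha>. S \<noteq> T \<longrightarrow>
                     (\<forall>x\<in>G. \<not> compatible (shift_tree x S) T)"
  shows "(\<forall>T. perfect_tree T \<longrightarrow>
           countable {(x, S). x \<in> G \<and> S \<in> (\<Union>\<alpha>. Tm \<alpha>) \<and> somewhere_dense (shift_tree x S) T})
         \<and> G_matrix g G Tm"
proof -
  have prop_iv: "\<forall>T. perfect_tree T \<longrightarrow>
    countable {(x, S). x \<in> G \<and> S \<in> (\<Union>\<alpha>. Tm \<alpha>) \<and> somewhere_dense (shift_tree x S) T}"
  proof (intro allI impI)
    fix T assume T: "perfect_tree T"
    define C where "C s = {(x, S). x \<in> G \<and> S \<in> (\<Union>\<alpha>. Tm \<alpha>) \<and> shift_list x ` subtree_at T s \<subseteq> S}"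
      for s
    have "somewhere_dense (shift_tree x S) T \<longleftrightarrow> (\<exists>s\<in>T. shift_list x ` subtree_at T s \<subseteq> S)"
      for x S
      unfolding somewhere_dense_def shift_tree_eq_image image_shift_list_subset_iff by (rule refl)
    hence "{(x, S). x \<in> G \<and> S \<in> (\<Union>\<alpha>. Tm \<alpha>) \<and> somewhere_dense (shift_tree x S) T}
           = (\<Union>s\<in>T. C s)"
      unfolding C_def by auto
    moreover have "countable (C s)" if "s \<in> T" for s
      unfolding C_def
      using countable_shifts_containing[OF assms perfect_tree_subtree_at[OF T that]] .
    ultimately show "countable {(x, S). x \<in> G \<and> S \<in> (\<Union>\<alpha>. Tm \<alpha>) \<and> somewhere_dense (shift_tree x S) T}"
      using countable_UN[OF countableI_type, of T C] by simp
  qed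
  moreover have "G_matrix g G Tm"
    unfolding G_matrix_def using prop_i prop_ii prop_iii prop_iv by (intro conjI)
  ultimately show ?thesis by (rule conjI)
qed

end
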